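(* Let $u\le v$ be positive integers, $n\ge0$, $I\in\mathrm{Hilb}^n(\{x^uy^v=0\},0)$, and $J^k=I\cap(x^ky^k)$. Let $0\le k\le v-2$ and suppose each of $J^k$ and $J^{k+1}$ is of type ① or ② (as defined below), with exponent pairs $(i_k,j_k)$ and $(i_{k+1},j_{k+1})$ respectively. Then (inequalities of pairs are componentwise): (1) if both are of type ①, then either $(i_k,j_k)=(i_{k+1},j_{k+1})$ or $(i_k,j_k)\ge(i_{k+1}+1,j_{k+1}+1)$; (2) if both are of type ②, then $(i_k,j_k)\ge(i_{k+1}+1,j_{k+1}+1)$; (3) if $J^k$ is of type ① and $J^{k+1}$ of type ②, then $(i_k,j_k)\ge(i_{k+1},j_{k+1})$; (4) if $J^k$ is of type ② and $J^{k+1}$ of type ①, then $(i_k,j_k)\ge(i_{k+1}+1,j_{k+1}+1)$.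
   Context: $\mathrm{Hilb}^n(\{x^uy^v=0\},0)$ is the set of ideals $I\subset\mathbb{C}[[x,y]]$ with $\dim_{\mathbb{C}}\mathbb{C}[[x,y]]/I=n$, supported at the origin, with $x^uy^v\in I$. For $0\le k\le v-1$: $J^k$ is of type ① with exponent pair $(i,j)$ if there are $a,b\in\mathbb{C}\setminus\{0\}$, integers $i,j\ge1$ and $h\in\mathbb{C}[[x,y]]$ such that $E=x^ky^k(ax^{i}+by^{j})+x^{k+1}y^{k+1}h\in J^k$ and $J^k=J^{k+1}+(E)$; $J^k$ is of type ② with exponent pair $(i,j)$ if there are integers $i,j\ge1$ and $h_1,h_2\in\mathbb{C}[[x,y]]$ such that $E_1=x^ky^kx^{i}+x^{k+1}y^{k+1}h_1$ and $E_2=x^ky^ky^{j}+x^{k+1}y^{k+1}h_2$ lie in $J^k$ and $J^k=J^{k+1}+(E_1,E_2)$, while $J^k$ is not of type ①. *)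

theory Defs
  imports Complex_Main
begin

text \<open>Formal power series in two variables x, y over the complex numbers,
  represented by their coefficient functions: f (a,b) is the coefficient of x^a y^b.\<close>

type_synonym ps = "nat \<times> nat \<Rightarrow> complex"

definition ps_add :: "ps \<Rightarrow> ps \<Rightarrow> ps" where
  "ps_add f g = (\<lambda>p. f p + g p)"

definition ps_smult :: "complex \<Rightarrow> ps \<Rightarrow> ps" where
  "ps_smult c f = (\<lambda>p. c * f p)"

definition ps_mult :: "ps \<Rightarrow> ps \<Rightarrow> ps" where
  "ps_mult f g = (\<lambda>(a,b). \<Sum>i\<le>a. \<Sum>j\<le>b. f (i,j) * g (a - i, b - j))"

definition mon :: "nat \<Rightarrow> nat \<Rightarrow> ps" where
  "mon a b = (\<lambda>p. if p = (a,b) then 1 else 0)"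

definition ps_zero :: ps where "ps_zero = (\<lambda>p. 0)"

definition ps_ideal :: "ps set \<Rightarrow> bool" where
  "ps_ideal I \<longleftrightarrow> ps_zero \<in> I \<and> (\<forall>f\<in>I. \<forall>g\<in>I. ps_add f g \<in> I)
     \<and> (\<forall>f\<in>I. \<forall>g. ps_mult g f \<in> I)"

definition ps_gen :: "ps set \<Rightarrow> ps set" where
  "ps_gen S = \<Inter>{I. ps_ideal I \<and> S \<subseteq> I}"

definition lincomb :: "(nat \<Rightarrow> complex) \<Rightarrow> ps list \<Rightarrow> ps" where
  "lincomb c bs = (\<lambda>p. \<Sum>i<length bs. c i * (bs ! i) p)"

text \<open>dim_C C[[x,y]]/I = n: there are n series whose classes form a basis of the quotient.\<close>
definition quot_dim :: "ps set \<Rightarrow> nat \<Rightarrow> bool" where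
  "quot_dim I n \<longleftrightarrow> (\<exists>bs. length bs = n
      \<and> (\<forall>f. \<exists>c. ps_add f (ps_smult (-1) (lincomb c bs)) \<in> I)
      \<and> (\<forall>c. lincomb c bs \<in> I \<longrightarrow> (\<forall>i<n. c i = 0)))"

text \<open>Hilb^n({x^u y^v = 0}, 0). (Every ideal of finite colength in C[[x,y]] is
  supported at the origin, since C[[x,y]] is local.)\<close>
definition hilb :: "nat \<Rightarrow> nat \<Rightarrow> nat \<Rightarrow> ps set \<Rightarrow> bool" where
  "hilb u v n I \<longleftrightarrow> ps_ideal I \<and> quot_dim I n \<and> mon u v \<in> I"

definition Jk :: "ps set \<Rightarrow> nat \<Rightarrow> ps set" where
  "Jk I k = I \<inter> {ps_mult (mon k k) g | g. True}"

definition type_one :: "ps set \<Rightarrow> nat \<Rightarrow> nat \<Rightarrow> nat \<Rightarrow> bool" where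
  "type_one I k i j \<longleftrightarrow> i \<ge> 1 \<and> j \<ge> 1 \<and>
     (\<exists>a b h. a \<noteq> 0 \<and> b \<noteq> 0 \<and>
       (let E = ps_add (ps_mult (mon k k) (ps_add (ps_smult a (mon i 0)) (ps_smult b (mon 0 j))))
                       (ps_mult (mon (k+1) (k+1)) h)
        in E \<in> Jk I k \<and> Jk I k = ps_gen (Jk I (k+1) \<union> {E})))"

definition type_two :: "ps set \<Rightarrow> nat \<Rightarrow> nat \<Rightarrow> nat \<Rightarrow> bool" where
  "type_two I k i j \<longleftrightarrow> i \<ge> 1 \<and> j \<ge> 1 \<and>
     (\<exists>h1 h2.
       (let E1 = ps_add (ps_mult (mon k k) (mon i 0)) (ps_mult (mon (k+1) (k+1)) h1);
            E2 = ps_add (ps_mult (mon k k) (mon 0 j)) (ps_mult (mon (k+1) (k+1)) h2)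
        in E1 \<in> Jk I k \<and> E2 \<in> Jk I k \<and> Jk I k = ps_gen (Jk I (k+1) \<union> {E1, E2})))
     \<and> \<not> (\<exists>i' j'. type_one I k i' j')"

end

theory Submission
  imports Defs
begin

text \<open>
  For f in J^k call the coefficients of x^(k+m) y^k and of x^k y^(k+m) the two edges of f.
  Multiplying f by g only convolves each edge with the corresponding axis of g, so the leading
  edge coefficients get rescaled by g(0,0). Hence if J^k is of type (1) with generator
  E = x^k y^k (a x^i + b y^j) + ..., the series divisible by (xy)^k whose edges vanish below
  i and j and whose edge coefficients at i and j satisfy b f(k+i,k) = a f(k,k+j) form an
  ideal; it contains J^(k+1) and E, hence J^k. For type (2) the same holds without the relation.
  Conversely xyE lies in J^(k+1) with edges concentrated exactly at i_k and j_k, and for type (2)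
  yE_1 and xE_2 lie in J^(k+1) with edge coefficient 1 at i_k - 1 and at j_k - 1. Testing these
  elements against the edge conditions of J^(k+1) gives the inequalities, and the relation of
  a type (1) ideal J^(k+1) forces i_k = i_(k+1) exactly when j_k = j_(k+1).
\<close>

lemma sum_sum_delta:
  fixes P Q a b :: nat and c :: "'a :: comm_monoid_add"
  shows "(\<Sum>i\<le>P. \<Sum>j\<le>Q. if i = a \<and> j = b then c else 0)
    = (if a \<le> P \<and> b \<le> Q then c else 0)"
proof -
  have "(\<Sum>i\<le>P. \<Sum>j\<le>Q. if i = a \<and> j = b then c else 0) =
      (\<Sum>i\<le>P. if i = a then (\<Sum>j\<le>Q. if j = b then c else 0) else 0)"
    by (intro sum.cong) auto
  then show ?thesis by (simp add: sum.delta)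
qed

lemma coeff_mon: "mon a b (p, q) = (if p = a \<and> q = b then 1 else 0)"
  by (simp add: mon_def)

lemma coeff_mult_mon:
  "ps_mult (mon a b) g (p, q) = (if a \<le> p \<and> b \<le> q then g (p - a, q - b) else 0)"
proof -
  have "ps_mult (mon a b) g (p, q) =
      (\<Sum>i\<le>p. \<Sum>j\<le>q. if i = a \<and> j = b then g (p - a, q - b) else 0)"
    unfolding ps_mult_def mon_def by (auto intro!: sum.cong)
  then show ?thesis by (simp add: sum_sum_delta)
qed

definition xy_divisible :: "nat \<Rightarrow> ps \<Rightarrow> bool" where
  "xy_divisible K f \<longleftrightarrow> (\<forall>p q. p < K \<or> q < K \<longrightarrow> f (p, q) = 0)"

lemma Jk_iff: "f \<in> Jk I K \<longleftrightarrow> f \<in> I \<and> xy_divisible K f"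
proof -
  have "f = ps_mult (mon K K) (\<lambda>(p, q). f (p + K, q + K))" if "xy_divisible K f"
  proof
    fix x show "f x = ps_mult (mon K K) (\<lambda>(p, q). f (p + K, q + K)) x"
      using that by (cases x) (auto simp: coeff_mult_mon xy_divisible_def)
  qed
  then show ?thesis
    unfolding Jk_def by (auto simp: coeff_mult_mon xy_divisible_def)
qed

definition ps_swap :: "ps \<Rightarrow> ps" where
  "ps_swap f = (\<lambda>(p, q). f (q, p))"

lemma coeff_ps_mult_swap: "ps_mult (ps_swap g) (ps_swap f) (p, q) = ps_mult g f (q, p)"
  unfolding ps_mult_def ps_swap_def by (simp add: sum.swap[of _ "{..p}"])

lemma xy_divisible_swap: "xy_divisible K (ps_swap f) \<longleftrightarrow> xy_divisible K f"
  unfolding xy_divisible_def ps_swap_def by auto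

lemma coeff_mult_x_edge:
  assumes "xy_divisible K f" and "\<forall>m<i. f (K + m, K) = 0" and "m \<le> i"
  shows "ps_mult g f (K + m, K) = g (0, 0) * f (K + m, K)"
proof -
  have "g (p, q) * f (K + m - p, K - q)
      = (if p = 0 \<and> q = 0 then g (0, 0) * f (K + m, K) else 0)"
    if "p \<le> K + m" "q \<le> K" for p q
  proof (cases "q = 0 \<and> p \<le> m")
    case True
    moreover have "f (K + m - p, K) = 0" if "p \<noteq> 0"
      using assms(2)[rule_format, of "m - p"] True assms(3) that by auto
    ultimately show ?thesis by auto
  next
    case False
    then have "p \<noteq> 0 \<or> q \<noteq> 0 \<Longrightarrow> K + m - p < K \<or> K - q < K" using that by auto
    then show ?thesis using False assms(1) unfolding xy_divisible_def by auto
  qed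
  then have "ps_mult g f (K + m, K) =
      (\<Sum>p\<le>K + m. \<Sum>q\<le>K. if p = 0 \<and> q = 0 then g (0, 0) * f (K + m, K) else 0)"
    unfolding ps_mult_def by (auto intro!: sum.cong)
  then show ?thesis by (simp add: sum_sum_delta)
qed

lemma coeff_mult_y_edge:
  assumes "xy_divisible K f" and "\<forall>m<j. f (K, K + m) = 0" and "m \<le> j"
  shows "ps_mult g f (K, K + m) = g (0, 0) * f (K, K + m)"
proof -
  have "ps_mult g f (K, K + m) = ps_mult (ps_swap g) (ps_swap f) (K + m, K)"
    by (simp add: coeff_ps_mult_swap)
  also have "\<dots> = ps_swap g (0, 0) * ps_swap f (K + m, K)"
    using assms xy_divisible_swap[of K f]
    by (intro coeff_mult_x_edge) (auto simp: ps_swap_def)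
  finally show ?thesis
    by (simp add: ps_swap_def)
qed

definition edge_ideal :: "nat \<Rightarrow> nat \<Rightarrow> nat \<Rightarrow> complex \<Rightarrow> complex \<Rightarrow> ps set" where
  "edge_ideal K i j \<alpha> \<beta> = {f. xy_divisible K f
      \<and> (\<forall>m<i. f (K + m, K) = 0) \<and> (\<forall>m<j. f (K, K + m) = 0)
      \<and> \<alpha> * f (K + i, K) + \<beta> * f (K, K + j) = 0}"

lemma ps_ideal_edge_ideal: "ps_ideal (edge_ideal K i j \<alpha> \<beta>)"
  unfolding ps_ideal_def
proof (intro conjI ballI allI)
  show "ps_zero \<in> edge_ideal K i j \<alpha> \<beta>"
    by (simp add: edge_ideal_def ps_zero_def xy_divisible_def)
next
  fix f g assume "f \<in> edge_ideal K i j \<alpha> \<beta>" "g \<in> edge_ideal K i j \<alpha> \<beta>"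
  moreover have "\<alpha> * (x + y) + \<beta> * (x' + y') = (\<alpha> * x + \<beta> * x') + (\<alpha> * y + \<beta> * y')"
    for x y x' y' :: complex
    by (simp add: algebra_simps)
  ultimately show "ps_add f g \<in> edge_ideal K i j \<alpha> \<beta>"
    by (simp add: edge_ideal_def xy_divisible_def ps_add_def)
next
  fix f g assume "f \<in> edge_ideal K i j \<alpha> \<beta>"
  then have f: "xy_divisible K f" "\<forall>m<i. f (K + m, K) = 0" "\<forall>m<j. f (K, K + m) = 0"
    and rel: "\<alpha> * f (K + i, K) + \<beta> * f (K, K + j) = 0"
    by (auto simp: edge_ideal_def)
  note x_edge = coeff_mult_x_edge[OF f(1,2)] and y_edge = coeff_mult_y_edge[OF f(1,3)]
  have "xy_divisible K (ps_mult g f)"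
    using f(1) unfolding xy_divisible_def ps_mult_def by auto
  moreover have "\<alpha> * ps_mult g f (K + i, K) + \<beta> * ps_mult g f (K, K + j)
      = g (0, 0) * (\<alpha> * f (K + i, K) + \<beta> * f (K, K + j))"
    by (simp add: x_edge y_edge algebra_simps)
  ultimately show "ps_mult g f \<in> edge_ideal K i j \<alpha> \<beta>"
    using f rel x_edge y_edge by (simp add: edge_ideal_def)
qed

lemma ps_gen_least: "ps_ideal T \<Longrightarrow> S \<subseteq> T \<Longrightarrow> ps_gen S \<subseteq> T"
  unfolding ps_gen_def by blast

lemma Jk_Suc_subset_edge_ideal: "Jk I (K + 1) \<subseteq> edge_ideal K i j \<alpha> \<beta>"
  by (auto simp: Jk_iff edge_ideal_def xy_divisible_def)

definition lead_form :: "nat \<Rightarrow> ps \<Rightarrow> ps \<Rightarrow> ps" where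
  "lead_form k X h = ps_add (ps_mult (mon k k) X) (ps_mult (mon (k + 1) (k + 1)) h)"

lemma coeff_lead_form:
  "lead_form k X h (p, q) = (if k \<le> p \<and> k \<le> q then X (p - k, q - k) else 0)
     + (if k < p \<and> k < q then h (p - k - 1, q - k - 1) else 0)"
  by (simp add: lead_form_def ps_add_def coeff_mult_mon Suc_le_eq)

lemma lead_form_in_edge_ideal:
  assumes "\<forall>m<i. X (m, 0) = 0" "\<forall>m<j. X (0, m) = 0" "\<alpha> * X (i, 0) + \<beta> * X (0, j) = 0"
  shows "lead_form k X h \<in> edge_ideal k i j \<alpha> \<beta>"
  using assms unfolding edge_ideal_def mem_Collect_eq xy_divisible_def coeff_lead_form by simp

lemma Jk_subset_edge_ideal_if_type_one:
  assumes "type_one I k i j"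
  obtains a b where "a \<noteq> 0" "b \<noteq> 0" "Jk I k \<subseteq> edge_ideal k i j b (- a)"
proof -
  from assms obtain a b h where ab: "a \<noteq> 0" "b \<noteq> 0" and ij: "1 \<le> i" "1 \<le> j"
    and gen: "Jk I k = ps_gen (Jk I (k + 1) \<union>
      {lead_form k (ps_add (ps_smult a (mon i 0)) (ps_smult b (mon 0 j))) h})"
    unfolding type_one_def Let_def lead_form_def[symmetric] by blast
  have "lead_form k (ps_add (ps_smult a (mon i 0)) (ps_smult b (mon 0 j))) h
      \<in> edge_ideal k i j b (- a)"
    using ij by (intro lead_form_in_edge_ideal) (auto simp: ps_add_def ps_smult_def coeff_mon)
  then have "Jk I k \<subseteq> edge_ideal k i j b (- a)"
    unfolding gen by (intro ps_gen_least ps_ideal_edge_ideal)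
      (auto intro: Jk_Suc_subset_edge_ideal[THEN subsetD])
  with ab that show ?thesis by blast
qed

lemma Jk_subset_edge_ideal_if_type_two:
  assumes "type_two I k i j"
  shows "Jk I k \<subseteq> edge_ideal k i j 0 0"
proof -
  from assms obtain h1 h2 where ij: "1 \<le> i" "1 \<le> j"
    and gen: "Jk I k = ps_gen (Jk I (k + 1) \<union>
      {lead_form k (mon i 0) h1, lead_form k (mon 0 j) h2})"
    unfolding type_two_def Let_def lead_form_def[symmetric] by blast
  have "lead_form k (mon i 0) h1 \<in> edge_ideal k i j 0 0"
    and "lead_form k (mon 0 j) h2 \<in> edge_ideal k i j 0 0"
    using ij by (intro lead_form_in_edge_ideal; simp add: coeff_mon)+
  then show ?thesis
    unfolding gen by (intro ps_gen_least ps_ideal_edge_ideal)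
      (auto intro: Jk_Suc_subset_edge_ideal[THEN subsetD])
qed

lemma Jk_vanishing_below_exponents:
  assumes "type_one I k i j \<or> type_two I k i j" and "f \<in> Jk I k"
  shows "\<forall>m<i. f (k + m, k) = 0" and "\<forall>m<j. f (k, k + m) = 0"
proof -
  obtain \<alpha> \<beta> where "Jk I k \<subseteq> edge_ideal k i j \<alpha> \<beta>"
    using assms(1) Jk_subset_edge_ideal_if_type_one Jk_subset_edge_ideal_if_type_two by metis
  with assms(2) show "\<forall>m<i. f (k + m, k) = 0" "\<forall>m<j. f (k, k + m) = 0"
    by (auto simp: edge_ideal_def)
qed

lemma mult_in_Jk_Suc:
  assumes "ps_ideal I" and "f \<in> Jk I k" and "xy_divisible (k + 1) (ps_mult g f)"
  shows "ps_mult g f \<in> Jk I (k + 1)"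
  using assms unfolding Jk_iff ps_ideal_def by blast

lemma type_one_shifted_element:
  assumes "ps_ideal I" and "type_one I k i j"
  obtains a b F where "a \<noteq> 0" "b \<noteq> 0" "F \<in> Jk I (k + 1)"
    "\<forall>m. F (k + 1 + m, k + 1) = (if m = i then a else 0)"
    "\<forall>m. F (k + 1, k + 1 + m) = (if m = j then b else 0)"
proof -
  from assms(2) obtain a b h where ab: "a \<noteq> 0" "b \<noteq> 0" and ij: "1 \<le> i" "1 \<le> j"
    and E: "lead_form k (ps_add (ps_smult a (mon i 0)) (ps_smult b (mon 0 j))) h \<in> Jk I k"
    unfolding type_one_def Let_def lead_form_def[symmetric] by blast
  let ?F = "ps_mult (mon 1 1)
    (lead_form k (ps_add (ps_smult a (mon i 0)) (ps_smult b (mon 0 j))) h)"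
  have "?F \<in> Jk I (k + 1)"
    using assms(1) E
    by (rule mult_in_Jk_Suc) (auto simp: xy_divisible_def coeff_mult_mon coeff_lead_form)
  moreover have "\<forall>m. ?F (k + 1 + m, k + 1) = (if m = i then a else 0)"
    "\<forall>m. ?F (k + 1, k + 1 + m) = (if m = j then b else 0)"
    using ij by (simp_all add: coeff_mult_mon coeff_lead_form ps_add_def ps_smult_def coeff_mon)
  ultimately show ?thesis using ab that by blast
qed

lemma type_two_shifted_elements:
  assumes "ps_ideal I" and "type_two I k i j"
  shows "\<exists>F\<in>Jk I (k + 1). F (k + i, k + 1) = 1"
    and "\<exists>F\<in>Jk I (k + 1). F (k + 1, k + j) = 1"
proof -
  from assms(2) obtain h1 h2 where ij: "1 \<le> i" "1 \<le> j"
    and E1: "lead_form k (mon i 0) h1 \<in> Jk I k" and E2: "lead_form k (mon 0 j) h2 \<in> Jk I k"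
    unfolding type_two_def Let_def lead_form_def[symmetric] by blast
  have "ps_mult (mon 0 1) (lead_form k (mon i 0) h1) \<in> Jk I (k + 1)"
    using assms(1) E1 by (rule mult_in_Jk_Suc)
      (use ij in \<open>auto simp: xy_divisible_def coeff_mult_mon coeff_lead_form coeff_mon\<close>)
  moreover have "ps_mult (mon 0 1) (lead_form k (mon i 0) h1) (k + i, k + 1) = 1"
    using ij by (simp add: coeff_mult_mon coeff_lead_form coeff_mon)
  ultimately show "\<exists>F\<in>Jk I (k + 1). F (k + i, k + 1) = 1" by blast
  have "ps_mult (mon 1 0) (lead_form k (mon 0 j) h2) \<in> Jk I (k + 1)"
    using assms(1) E2 by (rule mult_in_Jk_Suc)
      (use ij in \<open>auto simp: xy_divisible_def coeff_mult_mon coeff_lead_form coeff_mon\<close>)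
  moreover have "ps_mult (mon 1 0) (lead_form k (mon 0 j) h2) (k + 1, k + j) = 1"
    using ij by (simp add: coeff_mult_mon coeff_lead_form coeff_mon)
  ultimately show "\<exists>F\<in>Jk I (k + 1). F (k + 1, k + j) = 1" by blast
qed

lemma exponents_le_if_type_one:
  assumes "ps_ideal I" and "type_one I k i0 j0"
    and "type_one I (k + 1) i1 j1 \<or> type_two I (k + 1) i1 j1"
  shows "i1 \<le> i0" and "j1 \<le> j0"
proof -
  obtain a b F where "a \<noteq> 0" "b \<noteq> 0" "F \<in> Jk I (k + 1)"
    and "\<forall>m. F (k + 1 + m, k + 1) = (if m = i0 then a else 0)"
    and "\<forall>m. F (k + 1, k + 1 + m) = (if m = j0 then b else 0)"
    using type_one_shifted_element[OF assms(1,2)] .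
  with Jk_vanishing_below_exponents[OF assms(3)] show "i1 \<le> i0" "j1 \<le> j0"
    by (metis not_le)+
qed

lemma exponents_less_if_type_two:
  assumes "ps_ideal I" and "type_two I k i0 j0"
    and "type_one I (k + 1) i1 j1 \<or> type_two I (k + 1) i1 j1"
  shows "i1 < i0" and "j1 < j0"
proof -
  have "1 \<le> i0" "1 \<le> j0" using assms(2) by (auto simp: type_two_def)
  then have shift: "k + i0 = k + 1 + (i0 - 1)" "k + j0 = k + 1 + (j0 - 1)" by simp_all
  obtain F1 F2 where "F1 \<in> Jk I (k + 1)" "F1 (k + i0, k + 1) = 1"
    and "F2 \<in> Jk I (k + 1)" "F2 (k + 1, k + j0) = 1"
    using type_two_shifted_elements[OF assms(1,2)] by blast
  with Jk_vanishing_below_exponents[OF assms(3)] have "\<not> i0 - 1 < i1" "\<not> j0 - 1 < j1"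
    unfolding shift by fastforce+
  with \<open>1 \<le> i0\<close> \<open>1 \<le> j0\<close> show "i1 < i0" "j1 < j0" by simp_all
qed

lemma exponents_eq_iff_if_both_type_one:
  assumes "ps_ideal I" and "type_one I k i0 j0" and "type_one I (k + 1) i1 j1"
  shows "i1 = i0 \<longleftrightarrow> j1 = j0"
proof -
  obtain a b F where ab: "a \<noteq> 0" "b \<noteq> 0" and F: "F \<in> Jk I (k + 1)"
    and x_edge: "\<forall>m. F (k + 1 + m, k + 1) = (if m = i0 then a else 0)"
    and y_edge: "\<forall>m. F (k + 1, k + 1 + m) = (if m = j0 then b else 0)"
    using type_one_shifted_element[OF assms(1,2)] .
  obtain a' b' where ab': "a' \<noteq> 0" "b' \<noteq> 0"
    and "Jk I (k + 1) \<subseteq> edge_ideal (k + 1) i1 j1 b' (- a')"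
    using Jk_subset_edge_ideal_if_type_one[OF assms(3)] .
  with F have "b' * F (k + 1 + i1, k + 1) - a' * F (k + 1, k + 1 + j1) = 0"
    by (auto simp: edge_ideal_def)
  then have "b' * (if i1 = i0 then a else 0) = a' * (if j1 = j0 then b else 0)"
    using x_edge y_edge by simp
  with ab ab' show ?thesis by (auto split: if_splits)
qed

theorem mainTheorem8:
  fixes u v n k i0 j0 i1 j1 :: nat and I :: "ps set"
  assumes "1 \<le> u" and "u \<le> v"
    and "hilb u v n I"
    and "k + 2 \<le> v"
    and "type_one I k i0 j0 \<or> type_two I k i0 j0"
    and "type_one I (k+1) i1 j1 \<or> type_two I (k+1) i1 j1"
  shows "(type_one I k i0 j0 \<and> type_one I (k+1) i1 j1 \<longrightarrow>
            ((i0, j0) = (i1, j1) \<or> (i0 \<ge> i1 + 1 \<and> j0 \<ge> j1 + 1)))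
       \<and> (type_two I k i0 j0 \<and> type_two I (k+1) i1 j1 \<longrightarrow>
            (i0 \<ge> i1 + 1 \<and> j0 \<ge> j1 + 1))
       \<and> (type_one I k i0 j0 \<and> type_two I (k+1) i1 j1 \<longrightarrow>
            (i0 \<ge> i1 \<and> j0 \<ge> j1))
       \<and> (type_two I k i0 j0 \<and> type_one I (k+1) i1 j1 \<longrightarrow>
            (i0 \<ge> i1 + 1 \<and> j0 \<ge> j1 + 1))"
proof -
  have I: "ps_ideal I" using assms(3) by (simp add: hilb_def)
  have "i1 \<le> i0 \<and> j1 \<le> j0" if "type_one I k i0 j0"
    using exponents_le_if_type_one[OF I that assms(6)] by blast
  moreover have "i1 < i0 \<and> j1 < j0" if "type_two I k i0 j0"
    using exponents_less_if_type_two[OF I that assms(6)] by blast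
  moreover have "i1 = i0 \<longleftrightarrow> j1 = j0" if "type_one I k i0 j0" "type_one I (k + 1) i1 j1"
    using exponents_eq_iff_if_both_type_one[OF I that] .
  ultimately show ?thesis by fastforce
qed

end
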